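(* In the rationalizable model, consider the following principal algorithm: for each agent $i=1,\dots,n$ and each opponent profile $a_{-i}\in A_{-i}$, the principal runs the single-agent binary-search procedure on agent $i$ (for each $a_i\in A_i$, use $\mathcal{O}(\log(1/\varepsilon))$ binary-search rounds to approximate to precision $\varepsilon$ the smallest $P^*(a_i)\in[0,1]$ such that agent $i$ plays $a_i$ when paid $P^*(a_i)$ on $a_i$ and $0$ on its other actions, and set $\tilde U_i(a_i,a_{-i}):=-P^*(a_i)$), while during these rounds paying every other agent $j\ne i$ according to $P_j^t(a_j')=2\cdot\mathbb{1}[a_j'=a_j]$, where $a_j$ is agent $j$'s action in $a_{-i}$; finally it outputs $\tilde U$. This algorithm $\varepsilon$-learns any game in $\mathcal{O}(nM\log(1/\varepsilon))$ rounds.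
   Context: A normal-form game has agents $i\in[n]$, finite action sets $A_i$ with $|A_i|=m_i\ge2$, $A=A_1\times\dots\times A_n$, $M=\prod_i m_i$, and utilities $U_i:A\to[0,1]$. The game is played over rounds $t=1,2,\dots$: the principal chooses payment functions $P_i^t:A_i\to\mathbb{R}_+$, creating the game $\Gamma^t$ with utilities $U_i^t(a)=U_i(a)+P_i^t(a_i)$; agents simultaneously choose actions $a_i^t$; the principal observes $a^t$. The principal initially knows only the action sets and that utilities lie in $[0,1]$. Rationalizable model: in each round each agent plays an action that survives iterated elimination of strictly dominated actions in $\Gamma^t$ (an action $a_i$ is strictly dominated if some mixed strategy $x_i\in\Delta(A_i)$ satisfies $U_i^t(x_i,a_{-i})>U_i^t(a_i,a_{-i})$ for all $a_{-i}$). The principal $\varepsilon$-learns the game if it outputs $\tilde U_i:A\to\mathbb{R}$ such that there exist $W_i:A_{-i}\to\mathbb{R}$ with $|U_i(a)+W_i(a_{-i})-\tilde U_i(a)|\le\varepsilon$ for all $i$ and $a\in A$. *)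

theory Defs
  imports "HOL-Library.FuncSet" Complex_Main
begin

text \<open>Agents are 0..n-1; agent i has actions {0..<m i}. Action profiles are
 extensional functions in PiE. Payment functions: P i b = payment to agent i for action b.\<close>

type_synonym profile = "nat \<Rightarrow> nat"
type_synonym payments = "nat \<Rightarrow> nat \<Rightarrow> real"
type_synonym history = "(payments \<times> profile) list"

definition profiles :: "nat \<Rightarrow> (nat \<Rightarrow> nat) \<Rightarrow> profile set" where
  "profiles n m = PiE {..<n} (\<lambda>i. {..<m i})"

definition num_profiles :: "nat \<Rightarrow> (nat \<Rightarrow> nat) \<Rightarrow> nat" where
  "num_profiles n m = (\<Prod>i<n. m i)"

definition util_pay :: "(nat \<Rightarrow> profile \<Rightarrow> real) \<Rightarrow> payments \<Rightarrow> nat \<Rightarrow> profile \<Rightarrow> real" where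
  "util_pay U P i a = U i a + P i (a i)"

definition strictly_dominated ::
  "nat \<Rightarrow> (nat \<Rightarrow> profile \<Rightarrow> real) \<Rightarrow> payments \<Rightarrow> (nat \<Rightarrow> nat set) \<Rightarrow> nat \<Rightarrow> nat \<Rightarrow> bool" where
  "strictly_dominated n U P S i b \<longleftrightarrow>
     (\<exists>x::nat \<Rightarrow> real. (\<forall>c\<in>S i. 0 \<le> x c) \<and> (\<Sum>c\<in>S i. x c) = 1 \<and>
        (\<forall>a\<in>PiE {..<n} S. a i = b \<longrightarrow>
            (\<Sum>c\<in>S i. x c * util_pay U P i (a(i := c))) > util_pay U P i a))"

definition elim_step ::
  "nat \<Rightarrow> (nat \<Rightarrow> profile \<Rightarrow> real) \<Rightarrow> payments \<Rightarrow> (nat \<Rightarrow> nat set) \<Rightarrow> (nat \<Rightarrow> nat set)" where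
  "elim_step n U P S = (\<lambda>i. if i < n then {b \<in> S i. \<not> strictly_dominated n U P S i b} else S i)"

definition rationalizable ::
  "nat \<Rightarrow> (nat \<Rightarrow> nat) \<Rightarrow> (nat \<Rightarrow> profile \<Rightarrow> real) \<Rightarrow> payments \<Rightarrow> nat \<Rightarrow> nat set" where
  "rationalizable n m U P i = (\<Inter>k. ((elim_step n U P ^^ k) (\<lambda>j. {..<m j})) i)"

text \<open>An agent behaviour: given the history of past rounds and the current payments,
 the profile the agents play.\<close>
definition valid_behaviour ::
  "nat \<Rightarrow> (nat \<Rightarrow> nat) \<Rightarrow> (nat \<Rightarrow> profile \<Rightarrow> real) \<Rightarrow> (history \<Rightarrow> payments \<Rightarrow> profile) \<Rightarrow> bool" where
  "valid_behaviour n m U \<beta> \<longleftrightarrow>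
     (\<forall>h P. \<beta> h P \<in> PiE {..<n} (rationalizable n m U P))"

definition test_pay :: "nat \<Rightarrow> nat \<Rightarrow> profile \<Rightarrow> real \<Rightarrow> payments" where
  "test_pay n i a p = (\<lambda>j c. if j < n then (if j = i then (if c = a i then p else 0)
                                     else (if c = a j then 2 else 0)) else 0)"

fun bsearch :: "(history \<Rightarrow> payments \<Rightarrow> profile) \<Rightarrow> nat \<Rightarrow> nat \<Rightarrow> profile \<Rightarrow> history
                \<Rightarrow> nat \<Rightarrow> real \<Rightarrow> real \<Rightarrow> real \<times> history" where
  "bsearch \<beta> n i a h 0 lo hi = (hi, h)"
| "bsearch \<beta> n i a h (Suc k) lo hi =
     (let mid = (lo + hi) / 2; P = test_pay n i a mid; act = \<beta> h P in
      if act i = a i then bsearch \<beta> n i a (h @ [(P, act)]) k lo mid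
      else bsearch \<beta> n i a (h @ [(P, act)]) k mid hi)"

fun run_tasks :: "(history \<Rightarrow> payments \<Rightarrow> profile) \<Rightarrow> nat \<Rightarrow> nat \<Rightarrow> (nat \<times> profile) list
                  \<Rightarrow> history \<Rightarrow> (nat \<Rightarrow> profile \<Rightarrow> real) \<Rightarrow> (nat \<Rightarrow> profile \<Rightarrow> real) \<times> history" where
  "run_tasks \<beta> n k [] h Ut = (Ut, h)"
| "run_tasks \<beta> n k ((i, a) # ts) h Ut =
     (let (p, h') = bsearch \<beta> n i a h k 0 1 in
      run_tasks \<beta> n k ts h' (Ut(i := (Ut i)(a := - p))))"

definition task_list :: "nat \<Rightarrow> (nat \<Rightarrow> nat) \<Rightarrow> (nat \<Rightarrow> profile list) \<Rightarrow> (nat \<times> profile) list" where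
  "task_list n m opp = concat (map (\<lambda>i. concat (map (\<lambda>c. map (\<lambda>b. (i, c(i := b))) [0..<m i]) (opp i))) [0..<n])"

text \<open>opp i enumerates the opponent profiles A_{-i} (profiles with component i erased).\<close>
definition valid_enum :: "nat \<Rightarrow> (nat \<Rightarrow> nat) \<Rightarrow> (nat \<Rightarrow> profile list) \<Rightarrow> bool" where
  "valid_enum n m opp \<longleftrightarrow> (\<forall>i<n. distinct (opp i) \<and>
       set (opp i) = (\<lambda>a. a(i := undefined)) ` profiles n m)"

definition principal_alg ::
  "(history \<Rightarrow> payments \<Rightarrow> profile) \<Rightarrow> nat \<Rightarrow> (nat \<Rightarrow> nat) \<Rightarrow> (nat \<Rightarrow> profile list) \<Rightarrow> nat
   \<Rightarrow> (nat \<Rightarrow> profile \<Rightarrow> real) \<times> history" where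
  "principal_alg \<beta> n m opp k = run_tasks \<beta> n k (task_list n m opp) [] (\<lambda>_ _. 0)"

text \<open>epsilon-learning: W i depends only on the opponent profile a_{-i}.\<close>
definition eps_learns ::
  "nat \<Rightarrow> (nat \<Rightarrow> nat) \<Rightarrow> (nat \<Rightarrow> profile \<Rightarrow> real) \<Rightarrow> (nat \<Rightarrow> profile \<Rightarrow> real) \<Rightarrow> real \<Rightarrow> bool" where
  "eps_learns n m U Ut \<epsilon> \<longleftrightarrow>
     (\<exists>W :: nat \<Rightarrow> profile \<Rightarrow> real. \<forall>i<n. \<forall>a\<in>profiles n m.
        \<bar>U i a + W i (a(i := undefined)) - Ut i a\<bar> \<le> \<epsilon>)"

end

theory Submission
  imports Defs
begin

(*
  Paying every opponent j of agent i the amount 2 for the action a_j makes a_j strictly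
  dominant for j, because utilities lie in [0,1].  So one round of elimination pins the
  opponents to a_{-i}, and in the second round agent i keeps only best responses to a_{-i}.
  Hence, when paid p on a_i, agent i plays a_i only if p >= T and deviates only if p <= T,
  where T = max_d U_i(d, a_{-i}) - U_i(a) lies in [0,1]; k rounds of binary search locate T
  within 2^-k.  The estimate -T differs from U_i(a) by -max_d U_i(d, a_{-i}), which depends on
  a_{-i} alone and therefore serves as W_i.  There are n M tasks of k = ceil(log2(1/eps))
  rounds each.
*)

lemma PiE_upd:
  "a \<in> PiE {..<n} S \<Longrightarrow> j < n \<Longrightarrow> e \<in> S j \<Longrightarrow> a(j := e) \<in> PiE {..<n} S"
  by (auto simp: PiE_iff extensional_def)

lemma best_response_not_strictly_dominated:
  assumes a: "a \<in> PiE {..<n} S"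
    and best: "\<And>c. c \<in> S i \<Longrightarrow> util_pay U P i (a(i := c)) \<le> util_pay U P i a"
  shows "\<not> strictly_dominated n U P S i (a i)"
proof
  assume "strictly_dominated n U P S i (a i)"
  then obtain x where x0: "\<forall>c\<in>S i. 0 \<le> x c" and x1: "(\<Sum>c\<in>S i. x c) = 1"
    and gt: "(\<Sum>c\<in>S i. x c * util_pay U P i (a(i := c))) > util_pay U P i a"
    using a unfolding strictly_dominated_def by blast
  have "(\<Sum>c\<in>S i. x c * util_pay U P i (a(i := c))) \<le> (\<Sum>c\<in>S i. x c * util_pay U P i a)"
    using x0 best by (intro sum_mono mult_left_mono) auto
  also have "\<dots> = util_pay U P i a"
    using x1 by (simp flip: sum_distrib_right)
  finally show False
    using gt by simp
qed

lemma strictly_dominated_by_pure: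
  assumes "finite (S i)" "d \<in> S i"
    and "\<And>a. a \<in> PiE {..<n} S \<Longrightarrow> a i = b \<Longrightarrow> util_pay U P i a < util_pay U P i (a(i := d))"
  shows "strictly_dominated n U P S i b"
proof -
  have "S i \<inter> {c. c = d} = {d}"
    using assms(2) by auto
  then show ?thesis
    unfolding strictly_dominated_def
    by (intro exI[of _ "\<lambda>c. of_bool (c = d)"]) (simp add: assms)
qed

lemma undominated_imp_best_response:
  assumes ext: "a \<in> extensional {..<n}"
    and pinned: "\<And>j. j < n \<Longrightarrow> j \<noteq> i \<Longrightarrow> S j \<subseteq> {a j}"
    and fin: "finite (S i)" and d: "d \<in> S i"
    and undom: "\<not> strictly_dominated n U P S i c"
  shows "util_pay U P i (a(i := d)) \<le> util_pay U P i (a(i := c))"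
proof (rule ccontr)
  assume worse: "\<not> ?thesis"
  have "strictly_dominated n U P S i c"
  proof (rule strictly_dominated_by_pure[where S = S, OF fin d])
    fix a' assume a': "a' \<in> PiE {..<n} S" "a' i = c"
    have "a' = a(i := c)"
    proof
      fix j
      show "a' j = (a(i := c)) j"
        using a' ext pinned[of j] by (cases "j < n") (auto simp: PiE_iff extensional_def)
    qed
    then show "util_pay U P i a' < util_pay U P i (a'(i := d))"
      using worse by simp
  qed
  with undom show False ..
qed

lemma test_pay_pins_opponent:
  assumes j: "j < n" "j \<noteq> i" and a: "a \<in> profiles n m"
    and U01: "\<forall>j<n. \<forall>a\<in>profiles n m. 0 \<le> U j a \<and> U j a \<le> 1"
  shows "elim_step n U (test_pay n i a p) (\<lambda>j. {..<m j}) j \<subseteq> {a j}"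
proof
  fix e
  assume e: "e \<in> elim_step n U (test_pay n i a p) (\<lambda>j. {..<m j}) j"
  have aj: "a j \<in> {..<m j}"
    using a j by (auto simp: profiles_def)
  have "strictly_dominated n U (test_pay n i a p) (\<lambda>j. {..<m j}) j e" if "e \<noteq> a j"
  proof (rule strictly_dominated_by_pure[where S = "\<lambda>j. {..<m j}", OF _ aj])
    fix a' assume a': "a' \<in> PiE {..<n} (\<lambda>j. {..<m j})" "a' j = e"
    then have "U j a' \<le> 1" "0 \<le> U j (a'(j := a j))"
      using U01 PiE_upd[OF a'(1) j(1) aj] j by (auto simp: profiles_def)
    then show "util_pay U (test_pay n i a p) j a' < util_pay U (test_pay n i a p) j (a'(j := a j))"
      using a'(2) that j by (simp add: util_pay_def test_pay_def)
  qed simp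
  then show "e \<in> {a j}"
    using e j by (auto simp: elim_step_def)
qed

lemma rationalizable_test_pay_best_response:
  fixes n i :: nat and a :: profile and p :: real
  defines "P \<equiv> test_pay n i a p"
  assumes i: "i < n" and a: "a \<in> profiles n m"
    and U01: "\<forall>j<n. \<forall>a\<in>profiles n m. 0 \<le> U j a \<and> U j a \<le> 1"
    and c: "c \<in> rationalizable n m U P i"
  shows "c < m i"
    and "\<And>d. d < m i \<Longrightarrow> util_pay U P i (a(i := d)) \<le> util_pay U P i (a(i := c))"
proof -
  define S1 where "S1 = elim_step n U P (\<lambda>j. {..<m j})"
  have "c \<in> (elim_step n U P ^^ 2) (\<lambda>j. {..<m j}) i"
    using c unfolding rationalizable_def by blast
  then have c1: "c \<in> S1 i" and undom: "\<not> strictly_dominated n U P S1 i c"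
    using i by (simp_all add: S1_def elim_step_def numeral_2_eq_2)
  have S1i: "S1 i \<subseteq> {..<m i}"
    using i by (auto simp: S1_def elim_step_def)
  then show "c < m i"
    using c1 by auto
  define g where "g d = util_pay U P i (a(i := d))" for d
  have ai: "a i < m i"
    using a i by (auto simp: profiles_def)
  have "Max (g ` {..<m i}) \<in> g ` {..<m i}"
    using ai by (intro Max_in) auto
  then obtain ds where ds: "ds < m i" and "g ds = Max (g ` {..<m i})"
    by auto
  then have ds_max: "\<And>d. d < m i \<Longrightarrow> g d \<le> g ds"
    by simp
  have "\<not> strictly_dominated n U P (\<lambda>j. {..<m j}) i ds"
    using best_response_not_strictly_dominated[of "a(i := ds)" n "\<lambda>j. {..<m j}" i U P]
      PiE_upd[of a n "\<lambda>j. {..<m j}" i ds] a i ds ds_max by (simp add: profiles_def g_def)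
  then have "ds \<in> S1 i"
    using i ds by (simp add: S1_def elim_step_def)
  moreover have "S1 j \<subseteq> {a j}" if "j < n" "j \<noteq> i" for j
    using test_pay_pins_opponent[OF that a U01] by (simp add: S1_def P_def)
  moreover have "a \<in> extensional {..<n}"
    using a by (simp add: profiles_def PiE_iff)
  moreover have "finite (S1 i)"
    using S1i finite_subset by blast
  ultimately have "g ds \<le> g c"
    using undominated_imp_best_response[of a n i S1 ds U P c] undom by (simp add: g_def)
  then show "util_pay U P i (a(i := d)) \<le> util_pay U P i (a(i := c))" if "d < m i" for d
    using ds_max[OF that] by (simp add: g_def)
qed

definition best_response_value ::
    "(nat \<Rightarrow> nat) \<Rightarrow> (nat \<Rightarrow> profile \<Rightarrow> real) \<Rightarrow> nat \<Rightarrow> profile \<Rightarrow> real" where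
  "best_response_value m U i a = Max ((\<lambda>d. U i (a(i := d))) ` {..<m i})"

lemma best_response_value_ge: "d < m i \<Longrightarrow> U i (a(i := d)) \<le> best_response_value m U i a"
  unfolding best_response_value_def by (intro Max_ge) auto

lemma best_response_value_le:
  "0 < m i \<Longrightarrow> (\<And>d. d < m i \<Longrightarrow> U i (a(i := d)) \<le> r) \<Longrightarrow> best_response_value m U i a \<le> r"
  unfolding best_response_value_def by (subst Max_le_iff) auto

lemma best_response_value_fun_upd [simp]:
  "best_response_value m U i (a(i := x)) = best_response_value m U i a"
  by (simp add: best_response_value_def)

lemma rationalizable_test_pay_threshold:
  assumes i: "i < n" and a: "a \<in> profiles n m"
    and U01: "\<forall>j<n. \<forall>a\<in>profiles n m. 0 \<le> U j a \<and> U j a \<le> 1"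
    and c: "c \<in> rationalizable n m U (test_pay n i a p) i"
  shows "c = a i \<Longrightarrow> 0 \<le> p \<Longrightarrow> best_response_value m U i a - U i a \<le> p"
    and "c \<noteq> a i \<Longrightarrow> p \<le> best_response_value m U i a - U i a"
proof -
  have ai: "a i < m i"
    using a i by (auto simp: profiles_def)
  have util: "util_pay U (test_pay n i a p) i (a(i := d)) = U i (a(i := d)) + (if d = a i then p else 0)"
    for d
    using i by (simp add: util_pay_def test_pay_def)
  have util_a: "util_pay U (test_pay n i a p) i a = U i a + p"
    using util[of "a i"] by simp
  note best = rationalizable_test_pay_best_response[OF i a U01 c]
  show "best_response_value m U i a - U i a \<le> p" if "c = a i" "0 \<le> p"
  proof -
    have "U i (a(i := d)) \<le> U i a + p" if "d < m i" for d
      using best(2)[OF that] \<open>c = a i\<close> \<open>0 \<le> p\<close> by (simp add: util util_a split: if_splits)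
    then show ?thesis
      using best_response_value_le[of m i U a "U i a + p"] ai by simp
  qed
  show "p \<le> best_response_value m U i a - U i a" if "c \<noteq> a i"
    using best(2)[OF ai] best_response_value_ge[of c m i U a] best(1) that by (simp add: util util_a)
qed

lemma length_bsearch: "length (snd (bsearch \<beta> n i a h k lo hi)) = length h + k"
  by (induction k arbitrary: h lo hi) (simp_all add: Let_def)

lemma bsearch_brackets_threshold:
  assumes plays: "\<And>h p. 0 \<le> p \<Longrightarrow> \<beta> h (test_pay n i a p) i = a i \<Longrightarrow> T \<le> p"
    and deviates: "\<And>h p. 0 \<le> p \<Longrightarrow> \<beta> h (test_pay n i a p) i \<noteq> a i \<Longrightarrow> p \<le> T"
    and "0 \<le> lo" "lo \<le> T" "T \<le> hi"
  shows "T \<le> fst (bsearch \<beta> n i a h k lo hi) \<and> fst (bsearch \<beta> n i a h k lo hi) \<le> T + (hi - lo) / 2 ^ k"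
  using assms(3-5)
proof (induction k arbitrary: h lo hi)
  case 0
  then show ?case by simp
next
  case (Suc k)
  define mid where "mid = (lo + hi) / 2"
  define h' where "h' = h @ [(test_pay n i a mid, \<beta> h (test_pay n i a mid))]"
  have mid: "0 \<le> mid" "(mid - lo) / 2 ^ k = (hi - lo) / 2 ^ Suc k" "(hi - mid) / 2 ^ k = (hi - lo) / 2 ^ Suc k"
    using Suc.prems by (simp_all add: mid_def field_simps)
  show ?case
  proof (cases "\<beta> h (test_pay n i a mid) i = a i")
    case True
    then have "bsearch \<beta> n i a h (Suc k) lo hi = bsearch \<beta> n i a h' k lo mid"
      by (simp add: Let_def mid_def h'_def)
    then show ?thesis
      using Suc.IH[of lo mid h'] Suc.prems plays[OF mid(1) True] mid by simp
  next
    case False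
    then have "bsearch \<beta> n i a h (Suc k) lo hi = bsearch \<beta> n i a h' k mid hi"
      by (simp add: Let_def mid_def h'_def)
    then show ?thesis
      using Suc.IH[of mid hi h'] Suc.prems deviates[OF mid(1) False] mid by simp
  qed
qed

lemma bsearch_estimates_utility:
  assumes i: "i < n" and a: "a \<in> profiles n m"
    and U01: "\<forall>j<n. \<forall>a\<in>profiles n m. 0 \<le> U j a \<and> U j a \<le> 1"
    and \<beta>: "valid_behaviour n m U \<beta>"
  shows "\<bar>U i a - best_response_value m U i a + fst (bsearch \<beta> n i a h k 0 1)\<bar> \<le> 1 / 2 ^ k"
proof -
  define T where "T = best_response_value m U i a - U i a"
  have played: "\<beta> h' (test_pay n i a p) i \<in> rationalizable n m U (test_pay n i a p) i" for h' p
    using \<beta> i unfolding valid_behaviour_def by blast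
  have ai: "a i < m i"
    using a i by (auto simp: profiles_def)
  have "0 \<le> T"
    using best_response_value_ge[of "a i" m i U a] ai by (simp add: T_def)
  moreover have "T \<le> 1"
  proof -
    have "U i (a(i := d)) \<le> 1" if "d < m i" for d
      using U01 i PiE_upd[of a n "\<lambda>j. {..<m j}" i d] a that by (auto simp: profiles_def)
    then show ?thesis
      using best_response_value_le[of m i U a 1] ai U01 i a by (force simp: T_def)
  qed
  ultimately have "T \<le> fst (bsearch \<beta> n i a h k 0 1) \<and> fst (bsearch \<beta> n i a h k 0 1) \<le> T + 1 / 2 ^ k"
    using bsearch_brackets_threshold[of \<beta> n i a T 0 1 h k]
      rationalizable_test_pay_threshold[OF i a U01 played] by (simp add: T_def)
  then show ?thesis
    by (simp add: T_def abs_le_iff)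
qed

lemma run_tasks_Cons:
  "bsearch \<beta> n i a h k 0 1 = (p, h') \<Longrightarrow>
    run_tasks \<beta> n k ((i, a) # ts) h Ut = run_tasks \<beta> n k ts h' (Ut(i := (Ut i)(a := - p)))"
  by simp

lemma run_tasks_unchanged: "(i, a) \<notin> set ts \<Longrightarrow> fst (run_tasks \<beta> n k ts h Ut) i a = Ut i a"
proof (induction ts arbitrary: h Ut)
  case (Cons t ts)
  obtain i' a' p h' where t: "t = (i', a')" and b: "bsearch \<beta> n i' a' h k 0 1 = (p, h')"
    by (metis prod.exhaust)
  have "(i, a) \<noteq> (i', a')" "(i, a) \<notin> set ts"
    using Cons.prems t by auto
  then show ?case
    using Cons.IH t b by (simp add: run_tasks_Cons)
qed simp

lemma run_tasks_entry:
  "(i, a) \<in> set ts \<Longrightarrow>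
    \<exists>h'. fst (run_tasks \<beta> n k ts h Ut) i a = - fst (bsearch \<beta> n i a h' k 0 1)"
proof (induction ts arbitrary: h Ut)
  case (Cons t ts)
  obtain i' a' p h' where t: "t = (i', a')" and b: "bsearch \<beta> n i' a' h k 0 1 = (p, h')"
    by (metis prod.exhaust)
  show ?case
  proof (cases "(i, a) \<in> set ts")
    case True
    then show ?thesis
      using Cons.IH t b by (simp add: run_tasks_Cons)
  next
    case False
    then have "(i, a) = (i', a')"
      using Cons.prems t by simp
    then have "fst (run_tasks \<beta> n k (t # ts) h Ut) i a = - fst (bsearch \<beta> n i a h k 0 1)"
      using run_tasks_unchanged[OF False] t b by (simp add: run_tasks_Cons)
    then show ?thesis ..
  qed
qed simp

lemma length_run_tasks: "length (snd (run_tasks \<beta> n k ts h Ut)) = length h + k * length ts"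
proof (induction ts arbitrary: h Ut)
  case (Cons t ts)
  obtain i' a' p h' where t: "t = (i', a')" and b: "bsearch \<beta> n i' a' h k 0 1 = (p, h')"
    by (metis prod.exhaust)
  then have "length h' = length h + k"
    using length_bsearch[of \<beta> n i' a' h k 0 1] by simp
  then show ?case
    using Cons.IH t b by (simp add: run_tasks_Cons)
qed simp

lemma task_list_covers:
  assumes "valid_enum n m opp" "i < n" "a \<in> profiles n m"
  shows "(i, a) \<in> set (task_list n m opp)"
proof -
  have "a(i := undefined) \<in> set (opp i)" "a i < m i"
    using assms by (auto simp: valid_enum_def profiles_def)
  then show ?thesis
    using assms(2) unfolding task_list_def
    by (force intro!: bexI[of _ "a(i := undefined)"])
qed

lemma card_opponent_profiles_mult:
  assumes i: "i < n"
  shows "card ((\<lambda>a. a(i := undefined)) ` profiles n m) * m i = num_profiles n m"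
proof -
  let ?E = "(\<lambda>a. a(i := undefined)) ` profiles n m"
  have "bij_betw (\<lambda>(c, b). c(i := b)) (?E \<times> {..<m i}) (profiles n m)"
  proof (rule bij_betwI')
    fix x y assume "x \<in> ?E \<times> {..<m i}" "y \<in> ?E \<times> {..<m i}"
    then obtain c b c' b' where xy: "x = (c, b)" "y = (c', b')"
      and undef: "c i = undefined" "c' i = undefined"
      by force
    have "c = c' \<and> b = b'" if eq: "c(i := b) = c'(i := b')"
    proof
      have "c = (c(i := b))(i := undefined)"
        using undef by auto
      also have "\<dots> = c'"
        using undef eq by auto
      finally show "c = c'" .
      show "b = b'"
        using fun_cong[OF eq, of i] by simp
    qed
    then show "((\<lambda>(c, b). c(i := b)) x = (\<lambda>(c, b). c(i := b)) y) = (x = y)"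
      using xy by auto
  next
    fix x assume "x \<in> ?E \<times> {..<m i}"
    then obtain a' b where "x = (a'(i := undefined), b)" "a' \<in> profiles n m" "b < m i"
      by auto
    then show "(\<lambda>(c, b). c(i := b)) x \<in> profiles n m"
      using PiE_upd[of a' n "\<lambda>j. {..<m j}" i b] i by (simp add: profiles_def)
  next
    fix a assume "a \<in> profiles n m"
    then have "(a(i := undefined), a i) \<in> ?E \<times> {..<m i}"
      using i by (auto simp: profiles_def)
    then show "\<exists>x\<in>?E \<times> {..<m i}. a = (\<lambda>(c, b). c(i := b)) x"
      by (rule bexI[rotated]) simp
  qed
  then have "card (?E \<times> {..<m i}) = card (profiles n m)"
    by (rule bij_betw_same_card)
  then show ?thesis
    by (simp add: card_cartesian_product profiles_def num_profiles_def card_PiE)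
qed

lemma length_task_list:
  assumes "valid_enum n m opp"
  shows "length (task_list n m opp) = n * num_profiles n m"
proof -
  have "length (opp i) * m i = num_profiles n m" if "i < n" for i
    using assms that card_opponent_profiles_mult[OF that, of m] distinct_card[of "opp i"]
    by (simp add: valid_enum_def)
  then have "(\<Sum>i<n. length (opp i) * m i) = n * num_profiles n m"
    by simp
  then show ?thesis
    by (simp add: task_list_def length_concat comp_def sum_list_triv
        sum_list_distinct_conv_sum_set atLeast0LessThan)
qed

lemma le_two_power_nat_ceiling_log: "1 \<le> x \<Longrightarrow> x \<le> 2 ^ nat \<lceil>log 2 x\<rceil>"
proof -
  assume x: "1 \<le> x"
  then have "x = 2 powr log 2 x"
    by simp
  also have "\<dots> \<le> 2 powr real (nat \<lceil>log 2 x\<rceil>)"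
    using x by (intro powr_mono) linarith+
  also have "\<dots> = 2 ^ nat \<lceil>log 2 x\<rceil>"
    by (simp add: powr_realpow)
  finally show ?thesis .
qed

lemma nat_ceiling_log_le_twice: "2 \<le> x \<Longrightarrow> real (nat \<lceil>log 2 x\<rceil>) \<le> 2 * log 2 x"
proof -
  assume "2 \<le> x"
  then have "1 \<le> log 2 x"
    by simp
  then show ?thesis
    by linarith
qed

lemma eps_learns_mono: "eps_learns n m U Ut \<delta> \<Longrightarrow> \<delta> \<le> \<epsilon> \<Longrightarrow> eps_learns n m U Ut \<epsilon>"
  unfolding eps_learns_def by (meson order_trans)

lemma principal_alg_learns:
  assumes U01: "\<forall>i<n. \<forall>a\<in>profiles n m. 0 \<le> U i a \<and> U i a \<le> 1"
    and \<beta>: "valid_behaviour n m U \<beta>" and opp: "valid_enum n m opp"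
    and alg: "principal_alg \<beta> n m opp k = (Ut, h)"
  shows "eps_learns n m U Ut (1 / 2 ^ k)"
  unfolding eps_learns_def
proof (intro exI[of _ "\<lambda>i c. - best_response_value m U i c"] allI impI ballI)
  fix i a assume i: "i < n" and a: "a \<in> profiles n m"
  obtain h' where "Ut i a = - fst (bsearch \<beta> n i a h' k 0 1)"
    using run_tasks_entry[OF task_list_covers[OF opp i a]] alg
    unfolding principal_alg_def by (metis fst_conv)
  then show "\<bar>U i a + - best_response_value m U i (a(i := undefined)) - Ut i a\<bar> \<le> 1 / 2 ^ k"
    using bsearch_estimates_utility[OF i a U01 \<beta>, of h' k] by simp
qed

lemma length_principal_alg:
  assumes "valid_enum n m opp" and "principal_alg \<beta> n m opp k = (Ut, h)"
  shows "length h = k * (n * num_profiles n m)"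
  using assms length_run_tasks[of \<beta> n k "task_list n m opp" "[]" "\<lambda>_ _. 0"] length_task_list
  unfolding principal_alg_def by (metis list.size(3) add_0 snd_conv)

theorem theorem4p2:
  "\<exists>C::real. \<forall>(n::nat) (m::nat \<Rightarrow> nat) (U::nat \<Rightarrow> profile \<Rightarrow> real) (\<epsilon>::real)
       (\<beta>::history \<Rightarrow> payments \<Rightarrow> profile) (opp::nat \<Rightarrow> profile list).
     (\<forall>i<n. 2 \<le> m i) \<longrightarrow>
     (\<forall>i<n. \<forall>a\<in>profiles n m. 0 \<le> U i a \<and> U i a \<le> 1) \<longrightarrow>
     0 < \<epsilon> \<longrightarrow> \<epsilon> \<le> 1/2 \<longrightarrow>
     valid_behaviour n m U \<beta> \<longrightarrow> valid_enum n m opp \<longrightarrow>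
     (let (Ut, h) = principal_alg \<beta> n m opp (nat \<lceil>log 2 (1/\<epsilon>)\<rceil>) in
        eps_learns n m U Ut \<epsilon> \<and>
        real (length h) \<le> C * real n * real (num_profiles n m) * ln (1/\<epsilon>))"
proof (intro exI[of _ "2 / ln 2"] allI impI)
  fix n :: nat and m :: "nat \<Rightarrow> nat" and U :: "nat \<Rightarrow> profile \<Rightarrow> real" and \<epsilon> :: real
    and \<beta> :: "history \<Rightarrow> payments \<Rightarrow> profile" and opp :: "nat \<Rightarrow> profile list"
  assume U01: "\<forall>i<n. \<forall>a\<in>profiles n m. 0 \<le> U i a \<and> U i a \<le> 1"
    and \<epsilon>: "0 < \<epsilon>" "\<epsilon> \<le> 1/2" and \<beta>: "valid_behaviour n m U \<beta>" and opp: "valid_enum n m opp"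
  define k where "k = nat \<lceil>log 2 (1/\<epsilon>)\<rceil>"
  obtain Ut h where alg: "principal_alg \<beta> n m opp k = (Ut, h)"
    by force
  have "1 / 2 ^ k \<le> \<epsilon>"
    using le_two_power_nat_ceiling_log[of "1/\<epsilon>"] \<epsilon> by (simp add: k_def field_simps)
  then have "eps_learns n m U Ut \<epsilon>"
    using eps_learns_mono principal_alg_learns[OF U01 \<beta> opp alg] by blast
  moreover have "real (length h) \<le> 2 / ln 2 * real n * real (num_profiles n m) * ln (1/\<epsilon>)"
  proof -
    have "real (length h) = real k * (real n * real (num_profiles n m))"
      using length_principal_alg[OF opp alg] by simp
    also have "\<dots> \<le> 2 * log 2 (1/\<epsilon>) * (real n * real (num_profiles n m))"
      using nat_ceiling_log_le_twice[of "1/\<epsilon>"] \<epsilon> by (intro mult_right_mono) (simp_all add: k_def field_simps)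
    finally show ?thesis
      by (simp add: log_def mult_ac)
  qed
  ultimately show "let (Ut, h) = principal_alg \<beta> n m opp (nat \<lceil>log 2 (1/\<epsilon>)\<rceil>) in
      eps_learns n m U Ut \<epsilon> \<and> real (length h) \<le> 2 / ln 2 * real n * real (num_profiles n m) * ln (1/\<epsilon>)"
    using alg by (simp add: k_def)
qed

end
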